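(* Let $\mathcal T=(S,\Sigma,\kappa)$ be an STS and $B\in\Sigma$. Suppose $\mathcal T$ is globally coarse w.r.t. $B$, i.e., there exists $p>0$ such that for every $s\in S$, either $\mathbb P^{\mathcal T}_{\delta_s}(\mathbf F B)\ge p$ or $\mathbb P^{\mathcal T}_{\delta_s}(\mathbf F B)=0$. Then $\mathcal T$ is decisive with respect to $B$.
   Context: A stochastic transition system (STS) is a triple $\mathcal T=(S,\Sigma,\kappa)$ where $(S,\Sigma)$ is a measurable space and $\kappa:S\times\Sigma\to[0,1]$ is a Markov kernel. $\mathrm{Dist}(S)$: probability distributions on $(S,\Sigma)$; $\delta_s$: Dirac at $s$. $\mathbb P^{\mathcal T}_\mu$ is the probability measure on runs $S^\omega$ induced by initial distribution $\mu$ and $\kappa$. $\mathbf F B$: runs visiting $B$ at some step. $\widetilde B=\{s\in S:\mathbb P^{\mathcal T}_{\delta_s}(\mathbf F B)=0\}$ (assumed measurable). $\mathcal T$ is decisive w.r.t. $B$ if for every $\mu\in\mathrm{Dist}(S)$, $\mathbb P^{\mathcal T}_\mu(\mathbf F B\vee\mathbf F\widetilde B)=1$. *)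

theory Defs
  imports "HOL-Probability.Probability"
begin

(* A stochastic transition system is modelled by a measurable space M
  (S = space M, Sigma = sets M) and a Markov kernel K, given as a measurable map
  K : M -> prob_algebra M (K s A is emeasure (K s) A).*)

definition markov_kernel :: "'s measure \<Rightarrow> ('s \<Rightarrow> 's measure) \<Rightarrow> bool" where
  "markov_kernel M K \<longleftrightarrow> K \<in> M \<rightarrow>\<^sub>M prob_algebra M"

primrec cyl_kernel :: "('s \<Rightarrow> 's measure) \<Rightarrow> 's set list \<Rightarrow> 's \<Rightarrow> ennreal" where
  "cyl_kernel K [] s = 1"
| "cyl_kernel K (A # As) s = (\<integral>\<^sup>+ t. indicator A t * cyl_kernel K As t \<partial>(K s))"

fun cyl_prob :: "('s \<Rightarrow> 's measure) \<Rightarrow> 's measure \<Rightarrow> 's set list \<Rightarrow> ennreal" where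
  "cyl_prob K \<mu> [] = 1"
| "cyl_prob K \<mu> (A # As) = (\<integral>\<^sup>+ s. indicator A s * cyl_kernel K As s \<partial>\<mu>)"

definition run_measure :: "'s measure \<Rightarrow> ('s \<Rightarrow> 's measure) \<Rightarrow> 's measure \<Rightarrow> 's stream measure" where
  "run_measure M K \<mu> = (THE P. sets P = sets (stream_space M) \<and> prob_space P \<and>
     (\<forall>As. set As \<subseteq> sets M \<longrightarrow> emeasure P (scylinder (space M) As) = cyl_prob K \<mu> As))"

definition Dist :: "'s measure \<Rightarrow> 's measure set" where
  "Dist M = {\<mu>. prob_space \<mu> \<and> sets \<mu> = sets M}"

definition ev_F :: "'s measure \<Rightarrow> 's set \<Rightarrow> 's stream set" where
  "ev_F M B = {\<omega> \<in> streams (space M). \<exists>n. \<omega> !! n \<in> B}"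

definition avoid_set :: "'s measure \<Rightarrow> ('s \<Rightarrow> 's measure) \<Rightarrow> 's set \<Rightarrow> 's set" where
  "avoid_set M K B = {s \<in> space M. measure (run_measure M K (return M s)) (ev_F M B) = 0}"

definition decisive :: "'s measure \<Rightarrow> ('s \<Rightarrow> 's measure) \<Rightarrow> 's set \<Rightarrow> bool" where
  "decisive M K B \<longleftrightarrow> (\<forall>\<mu> \<in> Dist M.
     measure (run_measure M K \<mu>) (ev_F M B \<union> ev_F M (avoid_set M K B)) = 1)"

definition globally_coarse :: "'s measure \<Rightarrow> ('s \<Rightarrow> 's measure) \<Rightarrow> 's set \<Rightarrow> bool" where
  "globally_coarse M K B \<longleftrightarrow> (\<exists>p>0. \<forall>s \<in> space M.
     measure (run_measure M K (return M s)) (ev_F M B) \<ge> p \<or>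
     measure (run_measure M K (return M s)) (ev_F M B) = 0)"

end

theory Submission
  imports Defs
begin

(* Let D be the set of states in neither B nor B-tilde, and h(s) the probability of staying in D
  forever when starting in s. Every state of D reaches B with probability at least p, so
  h <= 1 - p on D. On the other hand h(s) = 1_D(s) * \<integral> h d\<kappa>(s), and iterating this gives
  h <= (sup h) * P_s(first n+1 states in D) for every n, hence h <= (sup h) * h <= (sup h) * (1 - p).
  Taking the supremum forces sup h = 0: almost every run leaves D, i.e. visits B or B-tilde.
  As the run measure is given by a definite description, it also has to be shown to exist,
  via the Ionescu-Tulcea theorem, and to be unique, since cylinders generate the stream sigma-algebra. *)

section \<open>Iterated kernel integrals over cylinders\<close>

primrec cyl_integral :: "('s \<Rightarrow> 's measure) \<Rightarrow> 's set list \<Rightarrow> ('s \<Rightarrow> ennreal) \<Rightarrow> 's \<Rightarrow> ennreal" where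
  "cyl_integral K [] h s = h s"
| "cyl_integral K (A # As) h s = (\<integral>\<^sup>+ t. indicator A t * cyl_integral K As h t \<partial>K s)"

lemma cyl_integral_snoc:
  "cyl_integral K (As @ [A]) h s = cyl_integral K As (\<lambda>t. \<integral>\<^sup>+ y. indicator A y * h y \<partial>K t) s"
  by (induction As arbitrary: s) auto

lemma cyl_integral_one: "cyl_integral K As (\<lambda>_. 1) = cyl_kernel K As"
  by (induction As) (auto simp: fun_eq_iff)

lemma measurable_cyl_integral:
  assumes K: "K \<in> M \<rightarrow>\<^sub>M subprob_algebra M" and "set As \<subseteq> sets M" and h: "h \<in> borel_measurable M"
  shows "cyl_integral K As h \<in> borel_measurable M"
  using \<open>set As \<subseteq> sets M\<close>
proof (induction As)
  case Nil
  have "cyl_integral K [] h = h" by (rule ext) simp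
  then show ?case using h by simp
next
  case (Cons A As)
  then have [measurable]: "A \<in> sets M" "cyl_integral K As h \<in> borel_measurable M" by auto
  have "(\<lambda>N. \<integral>\<^sup>+ t. indicator A t * cyl_integral K As h t \<partial>N) \<in> borel_measurable (subprob_algebra M)"
    by measurable
  from measurable_comp[OF K this] show ?case by (simp add: comp_def)
qed

lemma measurable_cyl_kernel:
  "K \<in> M \<rightarrow>\<^sub>M subprob_algebra M \<Longrightarrow> set As \<subseteq> sets M \<Longrightarrow> cyl_kernel K As \<in> borel_measurable M"
  using measurable_cyl_integral[of K M As "\<lambda>_. 1"] by (simp add: cyl_integral_one)

section \<open>Existence and uniqueness of the run measure\<close>

locale sts =
  fixes M :: "'s measure" and K :: "'s \<Rightarrow> 's measure"
  assumes markov_kernel: "markov_kernel M K"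
begin

lemma measurable_K_prob_algebra: "K \<in> M \<rightarrow>\<^sub>M prob_algebra M"
  using markov_kernel unfolding markov_kernel_def .

lemma measurable_K[measurable]: "K \<in> M \<rightarrow>\<^sub>M subprob_algebra M"
  using measurable_K_prob_algebra by (rule measurable_prob_algebraD)

lemma
  assumes "s \<in> space M"
  shows prob_space_K: "prob_space (K s)" and sets_K: "sets (K s) = sets M"
    and space_K: "space (K s) = space M"
proof -
  have "K s \<in> space (prob_algebra M)"
    using measurable_K_prob_algebra assms by (rule measurable_space)
  then show "prob_space (K s)" and sets: "sets (K s) = sets M"
    by (auto simp: space_prob_algebra)
  from sets show "space (K s) = space M" by (rule sets_eq_imp_space_eq)
qed

end

lemma Dist_D:
  assumes "\<mu> \<in> Dist M" shows "prob_space \<mu>" and "sets \<mu> = sets M" and "space \<mu> = space M"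
  using assms sets_eq_imp_space_eq by (auto simp: Dist_def)

lemma return_in_Dist: "s \<in> space M \<Longrightarrow> return M s \<in> Dist M"
  by (simp add: Dist_def prob_space_return)

locale sts_run = sts +
  fixes \<mu> :: "'s measure"
  assumes initial_distribution: "\<mu> \<in> Dist M"
begin

definition step :: "nat \<Rightarrow> (nat \<Rightarrow> 's) \<Rightarrow> 's measure" where
  "step i x = (case i of 0 \<Rightarrow> \<mu> | Suc j \<Rightarrow> K (x j))"

lemma measurable_step: "step i \<in> PiM {0..<i} (\<lambda>_. M) \<rightarrow>\<^sub>M subprob_algebra M"
proof (cases i)
  case 0
  have "\<mu> \<in> space (subprob_algebra M)"
    using Dist_D[OF initial_distribution]
    by (auto simp: space_subprob_algebra intro: prob_space_imp_subprob_space)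
  then show ?thesis using 0 by (simp add: step_def[abs_def])
next
  case (Suc j)
  have "(\<lambda>x. x j) \<in> PiM {0..<i} (\<lambda>_. M) \<rightarrow>\<^sub>M M"
    using Suc by (intro measurable_component_singleton) auto
  from measurable_comp[OF this measurable_K] show ?thesis
    using Suc by (simp add: step_def[abs_def] comp_def)
qed

lemma prob_space_step: "x \<in> space (PiM {0..<i} (\<lambda>_. M)) \<Longrightarrow> prob_space (step i x)"
  using Dist_D(1)[OF initial_distribution] prob_space_K
  by (cases i) (auto simp: step_def space_PiM PiE_iff)

sublocale IT: Ionescu_Tulcea step "\<lambda>_. M"
  unfolding Ionescu_Tulcea_def using measurable_step prob_space_step by blast

abbreviation no_history :: "nat \<Rightarrow> 's" where
  "no_history \<equiv> \<lambda>_. undefined"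

lemma no_history_in_space: "no_history \<in> space (PiM {0..<0} (\<lambda>_. M))"
  by (simp add: space_PiM_empty)

lemma sets_C: "sets (IT.C 0 n no_history) = sets (PiM {0..<n} (\<lambda>_. M))"
  using IT.sets_C[OF no_history_in_space, of n] by simp

lemma space_C: "space (IT.C 0 n no_history) = space (PiM {0..<n} (\<lambda>_. M))"
  using IT.space_C[OF no_history_in_space, of n] by simp

lemma nn_integral_C_Suc:
  assumes "f \<in> borel_measurable (PiM {0..<Suc n} (\<lambda>_. M))"
  shows "(\<integral>\<^sup>+ x. f x \<partial>IT.C 0 (Suc n) no_history)
    = (\<integral>\<^sup>+ x. \<integral>\<^sup>+ y. f y \<partial>IT.eP n x \<partial>IT.C 0 n no_history)"
proof -
  have "IT.eP n \<in> IT.C 0 n no_history \<rightarrow>\<^sub>M subprob_algebra (PiM {0..<Suc n} (\<lambda>_. M))"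
    by (subst measurable_cong_sets[OF sets_C refl]) (rule IT.measurable_eP)
  then show ?thesis
    using assms by (simp add: nn_integral_bind[where B="PiM {0..<Suc n} (\<lambda>_. M)"])
qed

lemma measurable_path_weight:
  assumes "set As \<subseteq> sets M" "n < length As" "h \<in> borel_measurable M" "n < m"
  shows "(\<lambda>x. (\<Prod>i\<le>n. indicator (As ! i) (x i)) * h (x n) :: ennreal)
    \<in> borel_measurable (PiM {0..<m} (\<lambda>_. M))"
proof -
  have component: "(\<lambda>x. x i) \<in> PiM {0..<m} (\<lambda>_. M) \<rightarrow>\<^sub>M M" if "i < m" for i
    using that by (intro measurable_component_singleton) auto
  have "(\<lambda>x. indicator (As ! i) (x i) :: ennreal) \<in> borel_measurable (PiM {0..<m} (\<lambda>_. M))"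
    if "i \<le> n" for i
  proof -
    have "As ! i \<in> sets M" using assms that by (auto simp: subset_iff)
    then have "(indicator (As ! i) :: 's \<Rightarrow> ennreal) \<in> borel_measurable M" by measurable
    from measurable_comp[OF component this] that assms(4) show ?thesis by (simp add: comp_def)
  qed
  moreover have "(\<lambda>x. h (x n)) \<in> borel_measurable (PiM {0..<m} (\<lambda>_. M))"
    using measurable_comp[OF component assms(3), of n] assms(4) by (simp add: comp_def)
  ultimately show ?thesis
    by (intro borel_measurable_times_ennreal borel_measurable_prod_ennreal) auto
qed

lemma nn_integral_eP_path_weight:
  assumes x: "x \<in> space (PiM {0..<Suc n} (\<lambda>_. M))" and As: "set As \<subseteq> sets M" "Suc n < length As"
    and h: "h \<in> borel_measurable M"
  shows "(\<integral>\<^sup>+ y. (\<Prod>i\<le>Suc n. indicator (As ! i) (y i)) * h (y (Suc n)) \<partial>IT.eP (Suc n) x)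
    = (\<Prod>i\<le>n. indicator (As ! i) (x i)) * (\<integral>\<^sup>+ t. indicator (As ! Suc n) t * h t \<partial>K (x n))"
proof -
  have x_n: "x n \<in> space M" using x by (auto simp: space_PiM)
  have "(\<Prod>i\<le>n. indicator (As ! i) ((x(Suc n := y)) i)) = (\<Prod>i\<le>n. indicator (As ! i) (x i) :: ennreal)"
    for y by (rule prod.cong) auto
  then have weight_upd: "(\<Prod>i\<le>Suc n. indicator (As ! i) ((x(Suc n := y)) i))
      = (\<Prod>i\<le>n. indicator (As ! i) (x i)) * (indicator (As ! Suc n) y :: ennreal)" for y
    by simp
  have "As ! Suc n \<in> sets M" using As by (auto simp: subset_iff)
  then have "(\<lambda>t. indicator (As ! Suc n) t * h t) \<in> borel_measurable (K (x n))"
    using h by (simp add: measurable_cong_sets[OF sets_K[OF x_n] refl])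
  then show ?thesis
    using measurable_path_weight[OF As(1,2) h, of "Suc (Suc n)"]
    by (simp add: IT.nn_integral_eP[OF x] weight_upd step_def mult.assoc nn_integral_cmult)
qed

lemma nn_integral_C_path_weight:
  assumes "set (A # As) \<subseteq> sets M" and "h \<in> borel_measurable M"
  shows "(\<integral>\<^sup>+ x. (\<Prod>i\<le>length As. indicator ((A # As) ! i) (x i)) * h (x (length As))
      \<partial>IT.C 0 (Suc (length As)) no_history)
    = (\<integral>\<^sup>+ s. indicator A s * cyl_integral K As h s \<partial>\<mu>)"
  using assms
proof (induction As arbitrary: h rule: rev_induct)
  case Nil
  have C_1: "IT.C 0 (Suc (length [])) no_history = IT.eP 0 no_history"
    using bind_return[OF IT.measurable_eP no_history_in_space] by simp
  show ?case
    unfolding C_1 using measurable_path_weight[OF Nil.prems(1) _ Nil.prems(2), of 0 1]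
    by (simp add: IT.nn_integral_eP[OF no_history_in_space] step_def)
next
  case (snoc A' As)
  let ?n = "length As"
  have sets: "set (A # As) \<subseteq> sets M" "A' \<in> sets M" using snoc.prems by auto
  define h' where "h' t = (\<integral>\<^sup>+ y. indicator A' y * h y \<partial>K t)" for t
  have "(\<lambda>N. \<integral>\<^sup>+ y. indicator A' y * h y \<partial>N) \<in> borel_measurable (subprob_algebra M)"
    using sets(2) snoc.prems(2) by measurable
  from measurable_comp[OF measurable_K this] have h': "h' \<in> borel_measurable M"
    by (simp add: comp_def h'_def[abs_def])
  have "(\<integral>\<^sup>+ x. (\<Prod>i\<le>Suc ?n. indicator ((A # As @ [A']) ! i) (x i)) * h (x (Suc ?n))
      \<partial>IT.C 0 (Suc (Suc ?n)) no_history)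
    = (\<integral>\<^sup>+ x. \<integral>\<^sup>+ y. (\<Prod>i\<le>Suc ?n. indicator ((A # As @ [A']) ! i) (y i)) * h (y (Suc ?n))
      \<partial>IT.eP (Suc ?n) x \<partial>IT.C 0 (Suc ?n) no_history)"
    using measurable_path_weight[OF snoc.prems(1) _ snoc.prems(2), of "Suc ?n" "Suc (Suc ?n)"]
    by (intro nn_integral_C_Suc) simp
  also have "\<dots> = (\<integral>\<^sup>+ x. (\<Prod>i\<le>?n. indicator ((A # As) ! i) (x i)) * h' (x ?n)
      \<partial>IT.C 0 (Suc ?n) no_history)"
  proof (rule nn_integral_cong)
    fix x assume "x \<in> space (IT.C 0 (Suc ?n) no_history)"
    then have x: "x \<in> space (PiM {0..<Suc ?n} (\<lambda>_. M))" by (simp only: space_C)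
    have "(\<Prod>i\<le>?n. indicator ((A # As @ [A']) ! i) (x i)) = (\<Prod>i\<le>?n. indicator ((A # As) ! i) (x i) :: ennreal)"
      by (rule prod.cong) (auto simp: nth_Cons' nth_append)
    then show "(\<integral>\<^sup>+ y. (\<Prod>i\<le>Suc ?n. indicator ((A # As @ [A']) ! i) (y i)) * h (y (Suc ?n)) \<partial>IT.eP (Suc ?n) x)
      = (\<Prod>i\<le>?n. indicator ((A # As) ! i) (x i)) * h' (x ?n)"
      using nn_integral_eP_path_weight[OF x snoc.prems(1) _ snoc.prems(2)]
      by (simp add: h'_def nth_append)
  qed
  also have "\<dots> = (\<integral>\<^sup>+ s. indicator A s * cyl_integral K (As @ [A']) h s \<partial>\<mu>)"
    using snoc.IH[OF sets(1) h'] by (simp add: cyl_integral_snoc h'_def[abs_def])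
  finally show ?case by simp
qed

lemma PiE_nth_in_sets:
  assumes "set As \<subseteq> sets M"
  shows "PiE {0..<length As} ((!) As) \<in> sets (PiM {0..<length As} (\<lambda>_. M))"
  by (intro sets_PiM_I_finite) (auto intro!: subsetD[OF assms] nth_mem)

lemma emeasure_C_PiE:
  assumes "set As \<subseteq> sets M" and "As \<noteq> []"
  shows "emeasure (IT.C 0 (length As) no_history) (PiE {0..<length As} ((!) As)) = cyl_prob K \<mu> As"
proof -
  obtain A As' where As: "As = A # As'" using assms(2) by (cases As) auto
  let ?n = "length As'" and ?X = "PiE {0..<length As} ((!) As)"
  have "emeasure (IT.C 0 (length As) no_history) ?X = (\<integral>\<^sup>+ x. indicator ?X x \<partial>IT.C 0 (length As) no_history)"
    using PiE_nth_in_sets[OF assms(1)] by (simp add: sets_C)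
  also have "\<dots> = (\<integral>\<^sup>+ x. (\<Prod>i\<le>?n. indicator (As ! i) (x i)) * 1 \<partial>IT.C 0 (length As) no_history)"
  proof (rule nn_integral_cong)
    fix x assume "x \<in> space (IT.C 0 (length As) no_history)"
    then have "x \<in> extensional {0..<length As}" by (simp add: space_C space_PiM PiE_iff)
    then show "indicator ?X x = (\<Prod>i\<le>?n. indicator (As ! i) (x i)) * (1 :: ennreal)"
      by (auto simp: indicator_def PiE_iff As less_Suc_eq_le simp del: nth_Cons_Suc)
  qed
  also have "\<dots> = cyl_prob K \<mu> As"
    using nn_integral_C_path_weight[of A As' "\<lambda>_. 1"] assms(1)
    by (simp add: As cyl_integral_one del: nth_Cons_Suc)
  finally show ?thesis .
qed

lemma emeasure_lim_prod_emb:
  assumes "set As \<subseteq> sets M" and "As \<noteq> []"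
  shows "emeasure IT.PF.lim (prod_emb UNIV (\<lambda>_. M) {0..<length As} (PiE {0..<length As} ((!) As)))
    = cyl_prob K \<mu> As"
proof -
  let ?I = "{0..<length As}" and ?X = "PiE {0..<length As} ((!) As)"
  have X: "?X \<in> sets (PiM ?I (\<lambda>_. M))" by (rule PiE_nth_in_sets[OF assms(1)])
  then have "?X \<subseteq> (\<Pi>\<^sub>E i\<in>?I. space M)"
    using sets.sets_into_space by (fastforce simp: space_PiM)
  then show ?thesis
    using IT.lim[OF _ X] IT.emeasure_CI[OF subset_refl X] emeasure_C_PiE[OF assms]
    by (simp add: prod_emb_id)
qed

definition run :: "'s stream measure" where
  "run = distr IT.PF.lim (stream_space M) to_stream"

lemma sets_run: "sets run = sets (stream_space M)"
  by (simp add: run_def)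

lemma space_run: "space run = streams (space M)"
  by (simp add: run_def space_stream_space)

end

lemma scylinder_iff:
  "\<omega> \<in> streams S \<Longrightarrow> \<omega> \<in> scylinder S As \<longleftrightarrow> (\<forall>i<length As. \<omega> !! i \<in> As ! i)"
proof (induction As arbitrary: \<omega>)
  case (Cons A As)
  then show ?case
    using Cons.IH[OF streams_stl[OF Cons.prems]] by (auto simp: less_Suc_eq_0_disj)
qed simp

lemma streams_eq_scylinder: "streams S = scylinder S [S]"
  using scylinder_streams[of S "[S]"] by (auto intro: streams_shd streams_stl)

context sts_run
begin

lemma to_stream_vimage_scylinder:
  "to_stream -` scylinder (space M) As \<inter> space IT.PF.lim
    = prod_emb UNIV (\<lambda>_. M) {0..<length As} (PiE {0..<length As} ((!) As))"
proof -
  have "to_stream x \<in> scylinder (space M) As \<longleftrightarrow> (\<forall>i<length As. x i \<in> As ! i)"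
    if "\<forall>i. x i \<in> space M" for x :: "nat \<Rightarrow> 's"
    using that by (simp add: scylinder_iff to_stream_in_streams) (simp add: to_stream_def)
  then show ?thesis by (auto simp: prod_emb_def PiE_iff space_PiM)
qed

lemma emeasure_run_scylinder_nonempty:
  assumes "set As \<subseteq> sets M" and "As \<noteq> []"
  shows "emeasure run (scylinder (space M) As) = cyl_prob K \<mu> As"
proof -
  have "to_stream \<in> IT.PF.lim \<rightarrow>\<^sub>M stream_space M"
    by (subst measurable_cong_sets[OF IT.PF.sets_lim refl]) (rule measurable_to_stream)
  moreover have "scylinder (space M) As \<in> sets (stream_space M)"
    using assms by (intro sets_scylinder) auto
  ultimately have "emeasure run (scylinder (space M) As)
      = emeasure IT.PF.lim (to_stream -` scylinder (space M) As \<inter> space IT.PF.lim)"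
    unfolding run_def by (rule emeasure_distr)
  also have "\<dots> = cyl_prob K \<mu> As"
    unfolding to_stream_vimage_scylinder by (rule emeasure_lim_prod_emb[OF assms])
  finally show ?thesis .
qed

lemma prob_space_run: "prob_space run"
proof
  have "space run = scylinder (space M) [space M]"
    by (simp only: space_run streams_eq_scylinder)
  then have "emeasure run (space run) = cyl_prob K \<mu> [space M]"
    using emeasure_run_scylinder_nonempty[of "[space M]"] by simp
  also have "\<dots> = 1"
    using Dist_D[OF initial_distribution] prob_space.emeasure_space_1[of \<mu>] by simp
  finally show "emeasure run (space run) = 1" .
qed

lemma emeasure_run_scylinder:
  "set As \<subseteq> sets M \<Longrightarrow> emeasure run (scylinder (space M) As) = cyl_prob K \<mu> As"
  using prob_space.emeasure_space_1[OF prob_space_run] emeasure_run_scylinder_nonempty[of As]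
  by (cases "As = []") (auto simp: space_run)

end

lemma stream_measure_eqI:
  assumes "prob_space P" "prob_space Q" "sets P = sets (stream_space M)" "sets Q = sets (stream_space M)"
    and "\<And>As. set As \<subseteq> sets M \<Longrightarrow> emeasure P (scylinder (space M) As) = emeasure Q (scylinder (space M) As)"
  shows "P = Q"
proof (rule stream_space_eq_scylinder[where G="sets M" and C="{space M}" and S=M])
  show "Int_stable (sets M)" by (auto simp: Int_stable_def)
  fix As assume "As \<in> lists (sets M)"
  then show "emeasure P (scylinder (space M) As) = emeasure Q (scylinder (space M) As)"
    by (intro assms(5)) auto
qed (use assms sets.space_closed[of M] in auto)

context sts
begin

lemma
  assumes "\<mu> \<in> Dist M"
  shows sets_run_measure: "sets (run_measure M K \<mu>) = sets (stream_space M)"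
    and prob_space_run_measure: "prob_space (run_measure M K \<mu>)"
    and emeasure_run_measure_scylinder: "\<And>As. set As \<subseteq> sets M \<Longrightarrow>
      emeasure (run_measure M K \<mu>) (scylinder (space M) As) = cyl_prob K \<mu> As"
proof -
  interpret sts_run M K \<mu> by unfold_locales (rule assms)
  let ?P = "\<lambda>P. sets P = sets (stream_space M) \<and> prob_space P \<and>
     (\<forall>As. set As \<subseteq> sets M \<longrightarrow> emeasure P (scylinder (space M) As) = cyl_prob K \<mu> As)"
  have "?P run"
    using sets_run prob_space_run emeasure_run_scylinder by blast
  moreover have "P = run" if "?P P" for P
    using that sets_run prob_space_run emeasure_run_scylinder by (intro stream_measure_eqI) auto
  ultimately have "?P (run_measure M K \<mu>)"
    unfolding run_measure_def by (rule theI)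
  then show "sets (run_measure M K \<mu>) = sets (stream_space M)" "prob_space (run_measure M K \<mu>)"
    "\<And>As. set As \<subseteq> sets M \<Longrightarrow> emeasure (run_measure M K \<mu>) (scylinder (space M) As) = cyl_prob K \<mu> As"
    by auto
qed

end

section \<open>Staying in a set forever\<close>

definition always_upto :: "'s measure \<Rightarrow> nat \<Rightarrow> 's set \<Rightarrow> 's stream set" where
  "always_upto M n X = scylinder (space M) (replicate (Suc n) X)"

definition always :: "'s measure \<Rightarrow> 's set \<Rightarrow> 's stream set" where
  "always M X = {\<omega> \<in> streams (space M). \<forall>i. \<omega> !! i \<in> X}"

lemma always_upto_iff:
  "\<omega> \<in> always_upto M n X \<longleftrightarrow> \<omega> \<in> streams (space M) \<and> (\<forall>i\<le>n. \<omega> !! i \<in> X)"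
  using scylinder_iff[of \<omega> "space M" "replicate (Suc n) X"] scylinder_streams
  by (auto simp: always_upto_def less_Suc_eq_le simp del: replicate.simps)

lemma sets_always_upto: "X \<in> sets M \<Longrightarrow> always_upto M n X \<in> sets (stream_space M)"
  unfolding always_upto_def by (intro sets_scylinder) auto

lemma decseq_always_upto: "decseq (\<lambda>n. always_upto M n X)"
  by (auto simp: decseq_def always_upto_iff)

lemma INT_always_upto: "(\<Inter>n. always_upto M n X) = always M X"
  by (auto simp: always_upto_iff always_def) (metis order_refl)

lemma sets_always: "X \<in> sets M \<Longrightarrow> always M X \<in> sets (stream_space M)"
  unfolding INT_always_upto[symmetric] by (auto intro: sets_always_upto)

lemma ev_F_eq_streams_Diff_always: "ev_F M Y = streams (space M) - always M (space M - Y)"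
  by (auto simp: ev_F_def always_def streams_iff_snth)

lemma ev_F_Un: "ev_F M (Y \<union> Z) = ev_F M Y \<union> ev_F M Z"
  by (auto simp: ev_F_def)

definition stay_prob :: "('s \<Rightarrow> 's measure) \<Rightarrow> 's set \<Rightarrow> nat \<Rightarrow> 's \<Rightarrow> ennreal" where
  "stay_prob K X n s = indicator X s * cyl_kernel K (replicate n X) s"

definition persist_prob :: "('s \<Rightarrow> 's measure) \<Rightarrow> 's set \<Rightarrow> 's \<Rightarrow> ennreal" where
  "persist_prob K X s = (INF n. stay_prob K X n s)"

lemma stay_prob_Suc: "stay_prob K X (Suc n) s = indicator X s * (\<integral>\<^sup>+ t. stay_prob K X n t \<partial>K s)"
  by (simp add: stay_prob_def)

lemma persist_prob_le_stay_prob: "persist_prob K X s \<le> stay_prob K X n s"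
  unfolding persist_prob_def by (rule INF_lower) simp

lemma persist_prob_outside: "s \<notin> X \<Longrightarrow> persist_prob K X s = 0"
  using persist_prob_le_stay_prob[of K X s 0] by (simp add: stay_prob_def)

context sts
begin

lemma cyl_kernel_le_1: "set As \<subseteq> sets M \<Longrightarrow> s \<in> space M \<Longrightarrow> cyl_kernel K As s \<le> 1"
proof (induction As arbitrary: s)
  case (Cons A As)
  have "(\<integral>\<^sup>+ t. indicator A t * cyl_kernel K As t \<partial>K s) \<le> (\<integral>\<^sup>+ t. 1 \<partial>K s)"
    using Cons by (intro nn_integral_mono) (auto simp: space_K split: split_indicator)
  also have "\<dots> = 1"
    using prob_space.emeasure_space_1[OF prob_space_K[OF Cons.prems(2)]] by simp
  finally show ?case by simp
qed simp

lemma stay_prob_le_1: "X \<in> sets M \<Longrightarrow> stay_prob K X n s \<le> 1"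
  using cyl_kernel_le_1[of "replicate n X" s] sets.sets_into_space[of X M]
  by (auto simp: stay_prob_def set_replicate_conv_if split: split_indicator)

lemma persist_prob_le_1: "X \<in> sets M \<Longrightarrow> persist_prob K X s \<le> 1"
  by (rule order_trans[OF persist_prob_le_stay_prob stay_prob_le_1])

lemma measurable_stay_prob[measurable]:
  assumes [measurable]: "X \<in> sets M" shows "stay_prob K X n \<in> borel_measurable M"
proof -
  have [measurable]: "cyl_kernel K (replicate n X) \<in> borel_measurable M"
    by (rule measurable_cyl_kernel[OF measurable_K]) (simp add: set_replicate_conv_if)
  show ?thesis unfolding stay_prob_def[abs_def] by measurable
qed

lemma measurable_persist_prob[measurable]: "X \<in> sets M \<Longrightarrow> persist_prob K X \<in> borel_measurable M"
  unfolding persist_prob_def[abs_def] by measurable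

lemma stay_prob_Suc_le:
  assumes "X \<in> sets M" shows "stay_prob K X (Suc n) s \<le> stay_prob K X n s"
proof (induction n arbitrary: s)
  case 0
  show ?case
    using stay_prob_le_1[OF assms, of "Suc 0" s] by (auto simp: stay_prob_def split: split_indicator)
next
  case (Suc n)
  have "stay_prob K X (Suc (Suc n)) s = indicator X s * (\<integral>\<^sup>+ t. stay_prob K X (Suc n) t \<partial>K s)"
    by (rule stay_prob_Suc)
  also have "\<dots> \<le> indicator X s * (\<integral>\<^sup>+ t. stay_prob K X n t \<partial>K s)"
    by (intro mult_left_mono nn_integral_mono Suc.IH) simp
  finally show ?case by (simp add: stay_prob_Suc)
qed

lemma nn_integral_persist_prob:
  assumes N: "prob_space N" "sets N = sets M" and X: "X \<in> sets M"
  shows "(\<integral>\<^sup>+ s. persist_prob K X s \<partial>N) = (INF n. \<integral>\<^sup>+ s. stay_prob K X n s \<partial>N)"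
  unfolding persist_prob_def
proof (rule nn_integral_monotone_convergence_INF_decseq)
  show "decseq (\<lambda>n. stay_prob K X n)" by (intro decseq_SucI le_funI stay_prob_Suc_le[OF X])
  fix n
  show "stay_prob K X n \<in> borel_measurable N"
    using X by (simp add: measurable_cong_sets[OF N(2) refl])
  have "(\<integral>\<^sup>+ s. stay_prob K X n s \<partial>N) \<le> (\<integral>\<^sup>+ s. 1 \<partial>N)"
    by (intro nn_integral_mono stay_prob_le_1[OF X])
  also have "\<dots> = 1" using prob_space.emeasure_space_1[OF N(1)] by simp
  finally show "(\<integral>\<^sup>+ s. stay_prob K X n s \<partial>N) < \<infinity>" by (simp add: order_le_less_trans)
qed

lemma emeasure_run_measure_always_upto:
  assumes \<mu>: "\<mu> \<in> Dist M" and X: "X \<in> sets M"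
  shows "emeasure (run_measure M K \<mu>) (always_upto M n X) = (\<integral>\<^sup>+ s. stay_prob K X n s \<partial>\<mu>)"
  using emeasure_run_measure_scylinder[OF \<mu>, of "replicate (Suc n) X"] X
  by (simp add: always_upto_def stay_prob_def set_replicate_conv_if del: scylinder.simps)

lemma emeasure_run_measure_always:
  assumes \<mu>: "\<mu> \<in> Dist M" and X: "X \<in> sets M"
  shows "emeasure (run_measure M K \<mu>) (always M X) = (\<integral>\<^sup>+ s. persist_prob K X s \<partial>\<mu>)"
proof -
  interpret prob_space "run_measure M K \<mu>" by (rule prob_space_run_measure[OF \<mu>])
  have "emeasure (run_measure M K \<mu>) (always M X) = (INF n. emeasure (run_measure M K \<mu>) (always_upto M n X))"
    unfolding INT_always_upto[symmetric] using sets_always_upto[OF X] sets_run_measure[OF \<mu>]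
    by (intro INF_emeasure_decseq'[symmetric] decseq_always_upto) auto
  also have "\<dots> = (INF n. \<integral>\<^sup>+ s. stay_prob K X n s \<partial>\<mu>)"
    using emeasure_run_measure_always_upto[OF \<mu> X] by simp
  also have "\<dots> = (\<integral>\<^sup>+ s. persist_prob K X s \<partial>\<mu>)"
    using Dist_D[OF \<mu>] X by (simp add: nn_integral_persist_prob)
  finally show ?thesis .
qed

lemma emeasure_run_from_always:
  "s \<in> space M \<Longrightarrow> X \<in> sets M \<Longrightarrow>
    emeasure (run_measure M K (return M s)) (always M X) = persist_prob K X s"
  by (simp add: emeasure_run_measure_always return_in_Dist nn_integral_return)

lemma persist_prob_fixpoint:
  assumes X: "X \<in> sets M" and s: "s \<in> space M"
  shows "persist_prob K X s = indicator X s * (\<integral>\<^sup>+ t. persist_prob K X t \<partial>K s)"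
proof (cases "s \<in> X")
  case True
  have "persist_prob K X s = (INF n. stay_prob K X (Suc n) s)"
    unfolding persist_prob_def
  proof (rule antisym)
    show "(INF n. stay_prob K X n s) \<le> (INF n. stay_prob K X (Suc n) s)" by (rule INF_mono) auto
    show "(INF n. stay_prob K X (Suc n) s) \<le> (INF n. stay_prob K X n s)"
      using stay_prob_Suc_le[OF X] by (intro INF_mono) blast
  qed
  also have "\<dots> = (INF n. \<integral>\<^sup>+ t. stay_prob K X n t \<partial>K s)"
    using True by (simp add: stay_prob_Suc)
  also have "\<dots> = (\<integral>\<^sup>+ t. persist_prob K X t \<partial>K s)"
    using prob_space_K[OF s] sets_K[OF s] X by (simp add: nn_integral_persist_prob)
  finally show ?thesis using True by simp
qed (simp add: persist_prob_outside)

lemma persist_prob_le_SUP_mult_stay_prob: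
  assumes X: "X \<in> sets M" and "s \<in> space M"
  shows "persist_prob K X s \<le> (SUP t\<in>space M. persist_prob K X t) * stay_prob K X n s"
  using \<open>s \<in> space M\<close>
proof (induction n arbitrary: s)
  case 0
  then show ?case
    by (cases "s \<in> X") (auto simp: stay_prob_def persist_prob_outside intro: SUP_upper)
next
  case (Suc n)
  let ?q = "SUP t\<in>space M. persist_prob K X t"
  have "persist_prob K X s = indicator X s * (\<integral>\<^sup>+ t. persist_prob K X t \<partial>K s)"
    by (rule persist_prob_fixpoint[OF X Suc.prems])
  also have "\<dots> \<le> indicator X s * (\<integral>\<^sup>+ t. ?q * stay_prob K X n t \<partial>K s)"
    using Suc.IH by (intro mult_left_mono nn_integral_mono) (auto simp: space_K[OF Suc.prems])
  also have "\<dots> = indicator X s * (?q * (\<integral>\<^sup>+ t. stay_prob K X n t \<partial>K s))"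
    using X by (subst nn_integral_cmult) (simp_all add: measurable_cong_sets[OF sets_K[OF Suc.prems] refl])
  also have "\<dots> = ?q * stay_prob K X (Suc n) s"
    by (simp add: stay_prob_Suc ac_simps)
  finally show ?case .
qed

text \<open>Passing to the limit in the previous lemma gives \<open>h \<le> (sup h) * h\<close> for \<open>h = persist_prob K X\<close>,
  so a uniform bound \<open>c < 1\<close> for \<open>h\<close> on \<open>X\<close> forces \<open>sup h \<le> (sup h) * c\<close>.\<close>

lemma persist_prob_eq_0:
  assumes X: "X \<in> sets M" and "c < 1" and bound: "\<And>s. s \<in> X \<Longrightarrow> persist_prob K X s \<le> c"
    and "s \<in> space M"
  shows "persist_prob K X s = 0"
proof -
  let ?q = "SUP t\<in>space M. persist_prob K X t"
  have q_finite: "?q < \<top>"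
    using persist_prob_le_1[OF X] by (intro le_less_trans[OF SUP_least]) auto
  have le_q_mult: "persist_prob K X t \<le> ?q * persist_prob K X t" if t: "t \<in> space M" for t
  proof (rule LIMSEQ_le_const)
    have "(\<lambda>n. stay_prob K X n t) \<longlonglongrightarrow> persist_prob K X t"
      unfolding persist_prob_def by (intro LIMSEQ_INF decseq_SucI stay_prob_Suc_le[OF X])
    then show "(\<lambda>n. ?q * stay_prob K X n t) \<longlonglongrightarrow> ?q * persist_prob K X t"
      using q_finite by (intro ennreal_tendsto_cmult) auto
  qed (use persist_prob_le_SUP_mult_stay_prob[OF X t] in auto)
  have "?q \<le> ?q * c"
  proof (rule SUP_least)
    fix t assume t: "t \<in> space M"
    show "persist_prob K X t \<le> ?q * c"
    proof (cases "t \<in> X")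
      case True
      then show ?thesis using le_q_mult[OF t] bound[OF True] by (meson mult_left_mono order_trans zero_le)
    qed (simp add: persist_prob_outside)
  qed
  have "?q = 0"
  proof (rule ccontr)
    assume "?q \<noteq> 0"
    then have "?q * c < ?q * 1"
      using \<open>c < 1\<close> q_finite by (intro ennreal_mult_strict_left_mono) (auto simp: zero_less_iff_neq_zero)
    then show False using \<open>?q \<le> ?q * c\<close> by simp
  qed
  then show ?thesis using SUP_upper[OF \<open>s \<in> space M\<close>, of "persist_prob K X"] by simp
qed

lemma measure_run_measure_ev_F:
  assumes \<mu>: "\<mu> \<in> Dist M" and Y: "Y \<in> sets M"
  shows "measure (run_measure M K \<mu>) (ev_F M Y) = 1 - measure (run_measure M K \<mu>) (always M (space M - Y))"
proof -
  let ?P = "run_measure M K \<mu>"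
  interpret prob_space ?P by (rule prob_space_run_measure[OF \<mu>])
  have sets_P: "sets ?P = sets (stream_space M)" by (rule sets_run_measure[OF \<mu>])
  have "ev_F M Y = space ?P - always M (space M - Y)"
    unfolding ev_F_eq_streams_Diff_always sets_eq_imp_space_eq[OF sets_P] by (simp add: space_stream_space)
  moreover have "always M (space M - Y) \<in> events"
    using sets_always[OF sets.compl_sets[OF Y]] sets_P by simp
  ultimately show ?thesis by (simp add: prob_compl)
qed

lemma persist_prob_le_of_reach:
  assumes X: "X \<in> sets M" and Y: "Y \<in> sets M" and "X \<inter> Y = {}" and s: "s \<in> space M"
    and reach: "measure (run_measure M K (return M s)) (ev_F M Y) \<ge> p"
  shows "persist_prob K X s \<le> ennreal (1 - p)"
proof -
  let ?P = "run_measure M K (return M s)"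
  interpret prob_space ?P by (rule prob_space_run_measure[OF return_in_Dist[OF s]])
  have "persist_prob K X s = emeasure ?P (always M X)"
    by (rule emeasure_run_from_always[OF s X, symmetric])
  also have "\<dots> \<le> emeasure ?P (always M (space M - Y))"
  proof (rule emeasure_mono)
    show "always M X \<subseteq> always M (space M - Y)"
      using \<open>X \<inter> Y = {}\<close> sets.sets_into_space[OF X] by (auto simp: always_def)
    show "always M (space M - Y) \<in> events"
      using sets_always[OF sets.compl_sets[OF Y]] sets_run_measure[OF return_in_Dist[OF s]] by simp
  qed
  also have "\<dots> = ennreal (1 - measure ?P (ev_F M Y))"
    by (simp add: emeasure_eq_measure measure_run_measure_ev_F[OF return_in_Dist[OF s] Y])
  also have "\<dots> \<le> ennreal (1 - p)"
    using reach by (intro ennreal_leI) simp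
  finally show ?thesis .
qed

lemma measure_run_measure_ev_F_eq_1:
  assumes \<mu>: "\<mu> \<in> Dist M" and Y: "Y \<in> sets M"
    and never_stay: "\<And>s. s \<in> space M \<Longrightarrow> persist_prob K (space M - Y) s = 0"
  shows "measure (run_measure M K \<mu>) (ev_F M Y) = 1"
proof -
  have "emeasure (run_measure M K \<mu>) (always M (space M - Y)) = (\<integral>\<^sup>+ s. 0 \<partial>\<mu>)"
    unfolding emeasure_run_measure_always[OF \<mu> sets.compl_sets[OF Y]]
    by (rule nn_integral_cong) (simp add: never_stay Dist_D(3)[OF \<mu>])
  then have "measure (run_measure M K \<mu>) (always M (space M - Y)) = 0"
    by (simp add: measure_def)
  then show ?thesis by (simp add: measure_run_measure_ev_F[OF \<mu> Y])
qed

end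

theorem mainTheorem6:
  fixes M :: "'s measure" and K :: "'s \<Rightarrow> 's measure" and B :: "'s set"
  assumes "markov_kernel M K"
    and "B \<in> sets M"
    and "avoid_set M K B \<in> sets M"
    and "globally_coarse M K B"
  shows "decisive M K B"
proof -
  interpret sts M K by unfold_locales (rule assms(1))
  obtain p where "p > 0" and coarse: "\<And>s. s \<in> space M \<Longrightarrow>
      measure (run_measure M K (return M s)) (ev_F M B) \<ge> p \<or>
      measure (run_measure M K (return M s)) (ev_F M B) = 0"
    using assms(4) unfolding globally_coarse_def by blast
  let ?Y = "B \<union> avoid_set M K B"
  have Y: "?Y \<in> sets M" and D: "space M - ?Y \<in> sets M" using assms(2,3) by auto
  have "persist_prob K (space M - ?Y) s \<le> ennreal (1 - p)" if "s \<in> space M - ?Y" for s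
    using persist_prob_le_of_reach[OF D assms(2)] coarse that by (auto simp: avoid_set_def)
  then have "persist_prob K (space M - ?Y) s = 0" if "s \<in> space M" for s
    using persist_prob_eq_0[OF D _ _ that, of "ennreal (1 - p)"] \<open>p > 0\<close> by auto
  then show ?thesis
    unfolding decisive_def ev_F_Un[symmetric] using measure_run_measure_ev_F_eq_1[OF _ Y] by blast
qed

end
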